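(* For $1\le q\le\tilde q\le\mathsf n$, let $\widetilde X^{\tilde q}_{q:\mathsf n}$ be such that $\widetilde X^{\tilde q}_{\tilde q}\in\mathbb X$ is arbitrary and $\widetilde X^{\tilde q}_k=X_k$ for all $q\le k\le\mathsf n$ with $k\ne\tilde q$. Then for any $1\le q\le\tilde q\le\mathsf n$, \[\big|\log\mathbb P_{\pi_V}(X_q\mid X_{q+1:\mathsf n})-\log\mathbb P_{\pi_V}(\widetilde X^{\tilde q}_q\mid\widetilde X^{\tilde q}_{q+1:\mathsf n})\big|\le\nu_q^{-1}\prod_{k=q+1}^{\tilde q-1}(1-\nu_k)\] (empty products equal $1$).
   Context: Let $\mathsf n\ge1$, $\pi_V$ a probability on a measurable space $\mathbb V$, $\mathbb X$ a discrete set, $K_i:\mathbb X\times\mathbb V^2\to[0,\infty)$ with each $K_i(\cdot,v,w)$ a probability on $\mathbb X$. $\mathbb P_{\pi_V}$ is the law of $(V_{1:\mathsf n+1},X_{1:\mathsf n})$ with $V_i$ i.i.d. $\pi_V$ and, given $V$, $X_i$ independent with $\mathbb P(X_i=x\mid V)=K_i(x,V_i,V_{i+1})$; $\mathbb P_{\pi_V}(x_q\mid x_{q+1:\mathsf n})$ denotes the conditional probability that $X_q=x_q$ given $X_{q+1:\mathsf n}=x_{q+1:\mathsf n}$. Assumption H2: there exist $\nu_i>0$ with $\nu_i\le K_i(x,v,w)\le1$ for all $x,i,v,w$. *)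

theory Defs
  imports "HOL-Probability.Probability"
begin

text \<open>Joint law of (V_{1:n+1}, X_{1:n}): V_i i.i.d. with law M, and given V the X_i are
  independent with P(X_i = x | V) = K i x (V_i) (V_{i+1}).\<close>
definition hmm_law ::
  "'v measure \<Rightarrow> (nat \<Rightarrow> 'x \<Rightarrow> 'v \<Rightarrow> 'v \<Rightarrow> real) \<Rightarrow> nat \<Rightarrow> ((nat \<Rightarrow> 'v) \<times> (nat \<Rightarrow> 'x)) measure"
  where
  "hmm_law M K n =
     density (PiM {1..n+1} (\<lambda>_. M) \<Otimes>\<^sub>M PiM {1..n} (\<lambda>_. count_space UNIV))
       (\<lambda>(v, x). ennreal (\<Prod>i\<in>{1..n}. K i (x i) (v i) (v (Suc i))))"

definition cond_prob ::
  "'v measure \<Rightarrow> (nat \<Rightarrow> 'x \<Rightarrow> 'v \<Rightarrow> 'v \<Rightarrow> real) \<Rightarrow> nat \<Rightarrow> nat \<Rightarrow> (nat \<Rightarrow> 'x) \<Rightarrow> real"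
  where
  "cond_prob M K n q xs =
     measure (hmm_law M K n) {p \<in> space (hmm_law M K n). \<forall>k\<in>{q..n}. snd p k = xs k}
   / measure (hmm_law M K n) {p \<in> space (hmm_law M K n). \<forall>k\<in>{Suc q..n}. snd p k = xs k}"

end

theory Submission
  imports Defs
begin

text \<open>Let \<open>r\<^sub>a\<close> be the forward chain that pushes the constant \<open>1\<close> through the kernels
  \<open>K\<^sub>a(x\<^sub>a,_,_), ..., K\<^sub>n(x\<^sub>n,_,_)\<close>; its integral is the probability of the observations
  \<open>x\<^sub>a, ..., x\<^sub>n\<close>, so the conditional probability is \<open>\<integral>r\<^sub>q / \<integral>r\<^sub>q\<^sub>+\<^sub>1\<close>. After their first
  step both chains are driven by the same kernels, so the pointwise ratio \<open>r\<^sub>q / r\<^sub>q\<^sub>+\<^sub>1\<close>, which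
  starts in \<open>[\<nu>\<^sub>q, 1]\<close>, stays in an interval that every kernel preserves and that a kernel
  bounded below by \<open>\<nu>\<^sub>k\<close> shrinks by the factor \<open>1 - \<nu>\<^sub>k\<close>. Changing \<open>x\<^sub>q\<^sub>'\<close> leaves the
  kernels before \<open>q'\<close> untouched, so both observation sequences share an interval \<open>[lo, hi]\<close>
  with \<open>lo \<ge> \<nu>\<^sub>q\<close> and \<open>hi - lo \<le> \<Prod>\<^sub>k\<^sub>=\<^sub>q\<^sub>+\<^sub>1\<^sup>q\<^sup>'\<^sup>-\<^sup>1 (1 - \<nu>\<^sub>k)\<close>; both conditional
  probabilities lie in it, and \<open>\<bar>ln s - ln t\<bar> \<le> (hi - lo) / lo\<close> there.\<close>

lemma abs_ln_diff_le:
  fixes lo hi s t :: real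
  assumes "0 < lo" "lo \<le> s" "s \<le> hi" "lo \<le> t" "t \<le> hi"
  shows "\<bar>ln s - ln t\<bar> \<le> (hi - lo) / lo"
proof -
  have one_sided: "ln s' - ln t' \<le> (hi - lo) / lo"
    if "lo \<le> s'" "s' \<le> hi" "lo \<le> t'" "t' \<le> hi" for s' t'
  proof -
    have pos: "0 < s'" "0 < t'" using assms(1) that by auto
    have "ln s' - ln t' = ln (s' / t')" using pos by (simp add: ln_div)
    also have "\<dots> \<le> s' / t' - 1" using pos by (intro ln_le_minus_one) simp
    also have "\<dots> = (s' - t') / t'" using pos by (simp add: field_simps)
    also have "\<dots> \<le> (hi - lo) / lo"
      using that assms(1) by (intro frac_le) auto
    finally show ?thesis .
  qed
  show ?thesis using one_sided[of s t] one_sided[of t s] assms by (simp add: abs_le_iff)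
qed

lemma finite_UNIV_if_has_sum_lower_bound:
  fixes f :: "'a \<Rightarrow> real"
  assumes hs: "(f has_sum s) UNIV" and lb: "\<And>x. c \<le> f x" and c: "0 < c"
  shows "finite (UNIV :: 'a set)"
proof (rule ccontr)
  assume "infinite (UNIV :: 'a set)"
  then obtain F :: "'a set" where F: "finite F" "card F = nat \<lceil>s / c\<rceil> + 1"
    using infinite_arbitrarily_large by blast
  have "real (card F) * c \<le> sum f F"
    using sum_mono[of F "\<lambda>_. c" f] lb by simp
  also have "\<dots> \<le> s"
    using finite_sum_le_has_sum[OF hs F(1)] lb c by (meson order.trans less_imp_le subset_UNIV)
  finally have "real (card F) \<le> s / c" using c by (simp add: pos_le_divide_eq)
  moreover have "s / c < real (card F)" using F(2) by linarith
  ultimately show False by simp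
qed

lemma integrable_mult_bounded:
  fixes g h :: "'a \<Rightarrow> real"
  assumes g: "integrable M g" and hm: "h \<in> borel_measurable M" and hb: "\<And>x. x \<in> space M \<Longrightarrow> \<bar>h x\<bar> \<le> 1"
  shows "integrable M (\<lambda>x. g x * h x)"
proof (rule Bochner_Integration.integrable_bound[OF g])
  show "AE x in M. norm (g x * h x) \<le> norm (g x)"
    using hb by (intro AE_I2) (simp add: abs_mult mult_left_le)
qed (use g hm in measurable)

section \<open>Integral operators of kernels\<close>

definition kernel_apply :: "'v measure \<Rightarrow> ('v \<Rightarrow> 'v \<Rightarrow> real) \<Rightarrow> ('v \<Rightarrow> real) \<Rightarrow> 'v \<Rightarrow> real"
  where "kernel_apply M L u = (\<lambda>y. \<integral>x. u x * L x y \<partial>M)"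

lemma measurable_kernel_left:
  assumes "(\<lambda>p. L (fst p) (snd p)) \<in> borel_measurable (M \<Otimes>\<^sub>M M)" and "y \<in> space M"
  shows "(\<lambda>x. L x y) \<in> borel_measurable M"
  using measurable_comp[OF measurable_Pair2'[OF assms(2)] assms(1)] by (simp add: comp_def)

lemma measurable_kernel_right:
  assumes "(\<lambda>p. L (fst p) (snd p)) \<in> borel_measurable (M \<Otimes>\<^sub>M M)" and "x \<in> space M"
  shows "L x \<in> borel_measurable M"
  using measurable_comp[OF measurable_Pair1'[OF assms(2)] assms(1)] by (simp add: comp_def)

lemma measurable_kernel_swap:
  assumes "(\<lambda>p. L (fst p) (snd p)) \<in> borel_measurable (M \<Otimes>\<^sub>M M)"
  shows "(\<lambda>p. L (snd p) (fst p)) \<in> borel_measurable (M \<Otimes>\<^sub>M M)"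
  using measurable_comp[OF measurable_Pair[OF measurable_snd measurable_fst] assms] by (simp add: comp_def)

lemma borel_measurable_kernel_apply:
  assumes "sigma_finite_measure M" and "u \<in> borel_measurable M"
    and "(\<lambda>p. L (fst p) (snd p)) \<in> borel_measurable (M \<Otimes>\<^sub>M M)"
  shows "kernel_apply M L u \<in> borel_measurable M"
proof -
  have "(\<lambda>p. u (snd p) * L (snd p) (fst p)) \<in> borel_measurable (M \<Otimes>\<^sub>M M)"
    using borel_measurable_times[OF measurable_compose[OF measurable_snd assms(2)] measurable_kernel_swap[OF assms(3)]]
    by simp
  then show ?thesis
    unfolding kernel_apply_def
    by (intro sigma_finite_measure.borel_measurable_lebesgue_integral[OF assms(1)]) (simp add: case_prod_beta)
qed

lemma kernel_apply_diff:
  fixes L :: "'v \<Rightarrow> 'v \<Rightarrow> real"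
  assumes Lm: "(\<lambda>p. L (fst p) (snd p)) \<in> borel_measurable (M \<Otimes>\<^sub>M M)"
    and Lb: "\<And>x. x \<in> space M \<Longrightarrow> \<bar>L x y\<bar> \<le> 1" and y: "y \<in> space M"
    and iu: "integrable M u" and iw: "integrable M w"
  shows "kernel_apply M L (\<lambda>x. a * u x - b * w x) y = a * kernel_apply M L u y - b * kernel_apply M L w y"
proof -
  have "integrable M (\<lambda>x. u x * L x y)" "integrable M (\<lambda>x. w x * L x y)"
    using Lb by (intro integrable_mult_bounded[OF _ measurable_kernel_left[OF Lm y]] iu iw; simp)+
  then show ?thesis unfolding kernel_apply_def by (simp add: left_diff_distrib mult.assoc)
qed

lemma kernel_apply_between_integral:
  fixes L :: "'v \<Rightarrow> 'v \<Rightarrow> real"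
  assumes "prob_space M"
    and Lm: "(\<lambda>p. L (fst p) (snd p)) \<in> borel_measurable (M \<Otimes>\<^sub>M M)"
    and Lb: "\<And>x. x \<in> space M \<Longrightarrow> c \<le> L x y \<and> L x y \<le> 1" and c0: "0 \<le> c" and y: "y \<in> space M"
    and ig: "integrable M g" and g0: "\<And>x. x \<in> space M \<Longrightarrow> 0 \<le> g x"
  shows "c * (\<integral>x. g x \<partial>M) \<le> kernel_apply M L g y \<and> kernel_apply M L g y \<le> (\<integral>x. g x \<partial>M)"
proof -
  have igL: "integrable M (\<lambda>x. g x * L x y)"
    using Lb c0 by (intro integrable_mult_bounded[OF ig measurable_kernel_left[OF Lm y]]) force
  have "c * (\<integral>x. g x \<partial>M) = (\<integral>x. c * g x \<partial>M)" by simp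
  also have "\<dots> \<le> kernel_apply M L g y"
    unfolding kernel_apply_def
  proof (rule integral_mono)
    fix x assume x: "x \<in> space M"
    have "g x * c \<le> g x * L x y" using g0[OF x] Lb[OF x] by (intro mult_left_mono) auto
    then show "c * g x \<le> g x * L x y" by (simp add: mult.commute)
  qed (use ig igL in auto)
  finally have lower: "c * (\<integral>x. g x \<partial>M) \<le> kernel_apply M L g y" .
  have "kernel_apply M L g y \<le> (\<integral>x. g x \<partial>M)"
    unfolding kernel_apply_def
  proof (rule integral_mono)
    fix x assume x: "x \<in> space M"
    show "g x * L x y \<le> g x" using g0[OF x] Lb[OF x] by (simp add: mult_left_le)
  qed (use ig igL in auto)
  with lower show ?thesis ..
qed

lemma nn_integral_kernel_apply:
  fixes L :: "'v \<Rightarrow> 'v \<Rightarrow> real" and r :: "'v \<Rightarrow> real" and \<phi> :: "'v \<Rightarrow> ennreal"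
  assumes P: "prob_space M"
    and Lm: "(\<lambda>p. L (fst p) (snd p)) \<in> borel_measurable (M \<Otimes>\<^sub>M M)"
    and Lb: "\<And>x y. x \<in> space M \<Longrightarrow> y \<in> space M \<Longrightarrow> 0 \<le> L x y \<and> L x y \<le> 1"
    and rm: "r \<in> borel_measurable M" and rb: "\<And>y. y \<in> space M \<Longrightarrow> 0 \<le> r y \<and> r y \<le> 1"
    and \<phi>m: "\<phi> \<in> borel_measurable M"
  shows "(\<integral>\<^sup>+ y. ennreal (r y) * (\<integral>\<^sup>+ x. ennreal (L y x) * \<phi> x \<partial>M) \<partial>M)
       = (\<integral>\<^sup>+ x. ennreal (kernel_apply M L r x) * \<phi> x \<partial>M)"
proof -
  interpret prob_space M by (rule P)
  interpret PM: pair_sigma_finite M M by unfold_locales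
  have "(\<integral>\<^sup>+ y. ennreal (r y) * (\<integral>\<^sup>+ x. ennreal (L y x) * \<phi> x \<partial>M) \<partial>M)
      = (\<integral>\<^sup>+ y. (\<integral>\<^sup>+ x. ennreal (r y) * (ennreal (L y x) * \<phi> x) \<partial>M) \<partial>M)"
    using measurable_kernel_right[OF Lm] \<phi>m
    by (intro nn_integral_cong nn_integral_cmult[symmetric] borel_measurable_times_ennreal
        measurable_compose[OF _ measurable_ennreal]) auto
  also have "\<dots> = (\<integral>\<^sup>+ x. (\<integral>\<^sup>+ y. ennreal (r y) * (ennreal (L y x) * \<phi> x) \<partial>M) \<partial>M)"
  proof (rule PM.Fubini')
    have "(\<lambda>p. ennreal (r (snd p)) * (ennreal (L (snd p) (fst p)) * \<phi> (fst p))) \<in> borel_measurable (M \<Otimes>\<^sub>M M)"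
      using measurable_compose[OF measurable_snd rm] measurable_kernel_swap[OF Lm]
        measurable_compose[OF measurable_fst \<phi>m]
      by (intro borel_measurable_times_ennreal measurable_compose[OF _ measurable_ennreal]) auto
    then show "(\<lambda>(x, y). ennreal (r y) * (ennreal (L y x) * \<phi> x)) \<in> borel_measurable (M \<Otimes>\<^sub>M M)"
      by (simp add: case_prod_beta)
  qed
  also have "\<dots> = (\<integral>\<^sup>+ x. ennreal (kernel_apply M L r x) * \<phi> x \<partial>M)"
  proof (rule nn_integral_cong)
    fix x assume x: "x \<in> space M"
    have Lx: "(\<lambda>y. L y x) \<in> borel_measurable M" by (rule measurable_kernel_left[OF Lm x])
    have b: "0 \<le> r y * L y x \<and> r y * L y x \<le> 1" if y: "y \<in> space M" for y
      using rb[OF y] Lb[OF y x] by (auto intro!: mult_le_one)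
    have int: "integrable M (\<lambda>y. r y * L y x)"
      using rm Lx b by (intro integrable_const_bound[where B=1] AE_I2) auto
    have "(\<integral>\<^sup>+ y. ennreal (r y) * (ennreal (L y x) * \<phi> x) \<partial>M)
        = (\<integral>\<^sup>+ y. ennreal (r y * L y x) * \<phi> x \<partial>M)"
      using rb Lb[OF _ x] by (intro nn_integral_cong) (simp add: ennreal_mult mult.assoc)
    also have "\<dots> = (\<integral>\<^sup>+ y. ennreal (r y * L y x) \<partial>M) * \<phi> x"
      using Lx rm by (intro nn_integral_multc) measurable
    also have "(\<integral>\<^sup>+ y. ennreal (r y * L y x) \<partial>M) = ennreal (kernel_apply M L r x)"
      unfolding kernel_apply_def using int b by (intro nn_integral_eq_integral) auto
    finally show "(\<integral>\<^sup>+ y. ennreal (r y) * (ennreal (L y x) * \<phi> x) \<partial>M)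
        = ennreal (kernel_apply M L r x) * \<phi> x" .
  qed
  finally show ?thesis .
qed

section \<open>Contraction of ratio bounds\<close>

definition ratio_between :: "'v measure \<Rightarrow> ('v \<Rightarrow> real) \<Rightarrow> ('v \<Rightarrow> real) \<Rightarrow> real \<Rightarrow> real \<Rightarrow> bool"
  where "ratio_between M u w lo hi \<longleftrightarrow> (\<forall>y\<in>space M. lo * w y \<le> u y \<and> u y \<le> hi * w y)"

lemma ratio_between_integral:
  assumes R: "ratio_between M u w lo hi"
    and iu: "integrable M u" and iw: "integrable M w" and W: "0 < (\<integral>x. w x \<partial>M)"
  shows "lo \<le> (\<integral>x. u x \<partial>M) / (\<integral>x. w x \<partial>M) \<and> (\<integral>x. u x \<partial>M) / (\<integral>x. w x \<partial>M) \<le> hi"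
proof -
  have Rx: "lo * w x \<le> u x" "u x \<le> hi * w x" if "x \<in> space M" for x
    using R that unfolding ratio_between_def by auto
  have "lo * (\<integral>x. w x \<partial>M) = (\<integral>x. lo * w x \<partial>M)" by simp
  also have "\<dots> \<le> (\<integral>x. u x \<partial>M)" using iu iw Rx by (intro integral_mono) auto
  finally have "lo * (\<integral>x. w x \<partial>M) \<le> (\<integral>x. u x \<partial>M)" .
  moreover have "(\<integral>x. u x \<partial>M) \<le> (\<integral>x. hi * w x \<partial>M)" using iu iw Rx by (intro integral_mono) auto
  then have "(\<integral>x. u x \<partial>M) \<le> hi * (\<integral>x. w x \<partial>M)" by simp
  ultimately show ?thesis using W by (simp add: pos_le_divide_eq pos_divide_le_eq)
qed

lemma kernel_apply_ratio_gaps: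
  fixes L :: "'v \<Rightarrow> 'v \<Rightarrow> real" and u w :: "'v \<Rightarrow> real"
  assumes P: "prob_space M"
    and Lm: "(\<lambda>p. L (fst p) (snd p)) \<in> borel_measurable (M \<Otimes>\<^sub>M M)"
    and Lb: "\<And>x. x \<in> space M \<Longrightarrow> c \<le> L x y \<and> L x y \<le> 1" and c0: "0 \<le> c" and y: "y \<in> space M"
    and iu: "integrable M u" and iw: "integrable M w" and w0: "\<And>x. x \<in> space M \<Longrightarrow> 0 \<le> w x"
    and R: "ratio_between M u w lo hi"
  shows "lo * kernel_apply M L w y + c * (\<integral>x. u x - lo * w x \<partial>M) \<le> kernel_apply M L u y"
    and "kernel_apply M L u y + c * (\<integral>x. hi * w x - u x \<partial>M) \<le> hi * kernel_apply M L w y"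
    and "kernel_apply M L w y \<le> (\<integral>x. w x \<partial>M)"
proof -
  have Rx: "lo * w x \<le> u x" "u x \<le> hi * w x" if "x \<in> space M" for x
    using R that unfolding ratio_between_def by auto
  have Lyb: "\<bar>L x y\<bar> \<le> 1" if "x \<in> space M" for x using Lb[OF that] c0 by auto
  have "c * (\<integral>x. u x - lo * w x \<partial>M) \<le> kernel_apply M L (\<lambda>x. u x - lo * w x) y"
    by (intro kernel_apply_between_integral[OF P Lm Lb c0 y, THEN conjunct1]) (use iu iw Rx in auto)
  then show "lo * kernel_apply M L w y + c * (\<integral>x. u x - lo * w x \<partial>M) \<le> kernel_apply M L u y"
    using kernel_apply_diff[OF Lm Lyb y iu iw, of 1 lo] by simp
  have "c * (\<integral>x. hi * w x - u x \<partial>M) \<le> kernel_apply M L (\<lambda>x. hi * w x - u x) y"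
    by (intro kernel_apply_between_integral[OF P Lm Lb c0 y, THEN conjunct1]) (use iu iw Rx in auto)
  then show "kernel_apply M L u y + c * (\<integral>x. hi * w x - u x \<partial>M) \<le> hi * kernel_apply M L w y"
    using kernel_apply_diff[OF Lm Lyb y iw iu, of hi 1] by simp
  show "kernel_apply M L w y \<le> (\<integral>x. w x \<partial>M)"
    using kernel_apply_between_integral[OF P Lm Lb c0 y iw] w0 by auto
qed

text \<open>With \<open>E\<close>, \<open>F\<close> the masses of \<open>u - lo w\<close> and \<open>hi w - u\<close>, a kernel bounded below
  by \<open>c\<close> lets one raise \<open>lo\<close> by \<open>c E / W\<close> and lower \<open>hi\<close> by \<open>c F / W\<close>; since
  \<open>E + F = (hi - lo) W\<close> the interval shrinks by the factor \<open>1 - c\<close>.\<close>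
lemma ratio_between_kernel_apply_contract:
  fixes L :: "'v \<Rightarrow> 'v \<Rightarrow> real" and u w :: "'v \<Rightarrow> real"
  assumes P: "prob_space M"
    and Lm: "(\<lambda>p. L (fst p) (snd p)) \<in> borel_measurable (M \<Otimes>\<^sub>M M)"
    and Lb: "\<And>x y. x \<in> space M \<Longrightarrow> y \<in> space M \<Longrightarrow> c \<le> L x y \<and> L x y \<le> 1" and c0: "0 \<le> c"
    and iu: "integrable M u" and iw: "integrable M w" and w0: "\<And>x. x \<in> space M \<Longrightarrow> 0 \<le> w x"
    and W: "0 < (\<integral>x. w x \<partial>M)"
    and R: "ratio_between M u w lo hi"
  obtains lo' hi' where "lo \<le> lo'" "hi' \<le> hi" "hi' - lo' = (1 - c) * (hi - lo)"
    "ratio_between M (kernel_apply M L u) (kernel_apply M L w) lo' hi'"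
proof -
  define E F where "E = (\<integral>x. u x - lo * w x \<partial>M)" and "F = (\<integral>x. hi * w x - u x \<partial>M)"
  let ?W = "\<integral>x. w x \<partial>M"
  have Rx: "lo * w x \<le> u x" "u x \<le> hi * w x" if "x \<in> space M" for x
    using R that unfolding ratio_between_def by auto
  have E0: "0 \<le> E" unfolding E_def using Rx by (intro integral_nonneg_AE AE_I2) auto
  have F0: "0 \<le> F" unfolding F_def using Rx by (intro integral_nonneg_AE AE_I2) auto
  have EF: "E + F = (hi - lo) * ?W"
    unfolding E_def F_def using iu iw by (simp add: algebra_simps)
  show ?thesis
  proof
    show "lo \<le> lo + c * E / ?W" and "hi - c * F / ?W \<le> hi"
      using c0 E0 F0 W by auto
    have "c * E / ?W + c * F / ?W = c * (hi - lo)"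
      using W EF by (simp add: add_divide_distrib[symmetric] distrib_left[symmetric])
    then show "hi - c * F / ?W - (lo + c * E / ?W) = (1 - c) * (hi - lo)"
      by (simp add: algebra_simps)
    show "ratio_between M (kernel_apply M L u) (kernel_apply M L w) (lo + c * E / ?W) (hi - c * F / ?W)"
      unfolding ratio_between_def
    proof (intro ballI conjI)
      fix y assume y: "y \<in> space M"
      note gaps = kernel_apply_ratio_gaps[OF P Lm Lb[OF _ y] c0 y iu iw w0 R, folded E_def F_def]
      have "c * E / ?W * kernel_apply M L w y \<le> c * E / ?W * ?W"
        using gaps(3) c0 E0 W by (intro mult_left_mono) auto
      then show "(lo + c * E / ?W) * kernel_apply M L w y \<le> kernel_apply M L u y"
        using gaps(1) W by (simp add: distrib_right)
      have "c * F / ?W * kernel_apply M L w y \<le> c * F / ?W * ?W"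
        using gaps(3) c0 F0 W by (intro mult_left_mono) auto
      then show "kernel_apply M L u y \<le> (hi - c * F / ?W) * kernel_apply M L w y"
        using gaps(2) W by (simp add: left_diff_distrib)
    qed
  qed
qed

section \<open>Forward chains\<close>

text \<open>\<open>fwd_chain M f a j y\<close> integrates \<open>\<Prod>\<^sub>k\<^sub>=\<^sub>a\<^sup>a\<^sup>+\<^sup>j\<^sup>-\<^sup>1 f\<^sub>k(v\<^sub>k, v\<^sub>k\<^sub>+\<^sub>1)\<close> over
  \<open>v\<^sub>a, ..., v\<^sub>a\<^sub>+\<^sub>j\<^sub>-\<^sub>1\<close> drawn from \<open>M\<close>, with \<open>v\<^sub>a\<^sub>+\<^sub>j = y\<close>.\<close>
primrec fwd_chain :: "'v measure \<Rightarrow> (nat \<Rightarrow> 'v \<Rightarrow> 'v \<Rightarrow> real) \<Rightarrow> nat \<Rightarrow> nat \<Rightarrow> 'v \<Rightarrow> real" where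
  "fwd_chain M f a 0 = (\<lambda>_. 1)"
| "fwd_chain M f a (Suc j) = kernel_apply M (f (a + j)) (fwd_chain M f a j)"

lemma fwd_chain_cong:
  assumes "\<And>k. k \<in> {a..<a + j} \<Longrightarrow> f k = g k"
  shows "fwd_chain M f a j = fwd_chain M g a j"
  using assms by (induction j) auto

lemma borel_measurable_fwd_chain:
  assumes "prob_space M"
    and fm: "\<And>k. k \<in> {a..<a + j} \<Longrightarrow> (\<lambda>p. f k (fst p) (snd p)) \<in> borel_measurable (M \<Otimes>\<^sub>M M)"
  shows "fwd_chain M f a j \<in> borel_measurable M"
  using fm
proof (induction j)
  case (Suc j)
  have "sigma_finite_measure M"
    using \<open>prob_space M\<close> by (simp add: prob_space_imp_sigma_finite)
  with Suc show ?case by (simp add: borel_measurable_kernel_apply)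
qed simp

lemma fwd_chain_bounds:
  assumes P: "prob_space M"
    and fm: "\<And>k. k \<in> {a..<a + j} \<Longrightarrow> (\<lambda>p. f k (fst p) (snd p)) \<in> borel_measurable (M \<Otimes>\<^sub>M M)"
    and fb: "\<And>k x y. k \<in> {a..<a + j} \<Longrightarrow> x \<in> space M \<Longrightarrow> y \<in> space M \<Longrightarrow> c k \<le> f k x y \<and> f k x y \<le> 1"
    and c0: "\<And>k. k \<in> {a..<a + j} \<Longrightarrow> 0 \<le> c k"
    and y: "y \<in> space M"
  shows "(\<Prod>k\<in>{a..<a + j}. c k) \<le> fwd_chain M f a j y \<and> fwd_chain M f a j y \<le> 1"
  using fm fb c0 y
proof (induction j arbitrary: y)
  case (Suc j)
  interpret prob_space M by (rule P)
  let ?r = "fwd_chain M f a j"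
  have k: "a + j \<in> {a..<a + Suc j}" by simp
  have Cj: "0 \<le> (\<Prod>k\<in>{a..<a + j}. c k)" using Suc.prems(3) by (intro prod_nonneg) auto
  have IH: "(\<Prod>k\<in>{a..<a + j}. c k) \<le> ?r x \<and> ?r x \<le> 1" if "x \<in> space M" for x
    using Suc.prems that by (intro Suc.IH) auto
  have rm: "?r \<in> borel_measurable M" using Suc.prems(1) by (intro borel_measurable_fwd_chain[OF P]) auto
  have r_abs: "\<bar>?r x\<bar> \<le> 1" if "x \<in> space M" for x
    using IH[OF that] Cj unfolding abs_le_iff by linarith
  have ir: "integrable M ?r"
    using rm r_abs by (intro integrable_const_bound[where B=1] AE_I2) auto
  have int_r: "(\<Prod>k\<in>{a..<a + j}. c k) \<le> (\<integral>x. ?r x \<partial>M) \<and> (\<integral>x. ?r x \<partial>M) \<le> 1"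
    using IH ir prob_space integral_mono[OF _ ir, of "\<lambda>_. \<Prod>k\<in>{a..<a + j}. c k"]
      integral_mono[OF ir _, of "\<lambda>_. 1"] by auto
  have "c (a + j) * (\<integral>x. ?r x \<partial>M) \<le> kernel_apply M (f (a + j)) ?r y
      \<and> kernel_apply M (f (a + j)) ?r y \<le> (\<integral>x. ?r x \<partial>M)"
  proof (rule kernel_apply_between_integral[OF P Suc.prems(1)[OF k] _ Suc.prems(3)[OF k] Suc.prems(4) ir])
    fix x assume x: "x \<in> space M"
    show "c (a + j) \<le> f (a + j) x y \<and> f (a + j) x y \<le> 1" by (rule Suc.prems(2)[OF k x Suc.prems(4)])
    show "0 \<le> ?r x" using IH[OF x] Cj by linarith
  qed
  moreover have "(\<Prod>k\<in>{a..<a + j}. c k) * c (a + j) \<le> c (a + j) * (\<integral>x. ?r x \<partial>M)"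
    using int_r Suc.prems(3)[OF k] by (simp add: mult.commute mult_left_mono)
  ultimately show ?case
    using int_r by (simp add: prod.atLeastLessThan_Suc)
qed simp

lemma fwd_chain_unit_interval:
  assumes "prob_space M"
    and "\<And>k. k \<in> {a..<a + j} \<Longrightarrow> (\<lambda>p. f k (fst p) (snd p)) \<in> borel_measurable (M \<Otimes>\<^sub>M M)"
    and "\<And>k x y. k \<in> {a..<a + j} \<Longrightarrow> x \<in> space M \<Longrightarrow> y \<in> space M \<Longrightarrow> 0 \<le> f k x y \<and> f k x y \<le> 1"
    and "y \<in> space M"
  shows "0 \<le> fwd_chain M f a j y \<and> fwd_chain M f a j y \<le> 1"
proof -
  have "(\<Prod>k\<in>{a..<a + j}. 0) \<le> fwd_chain M f a j y \<and> fwd_chain M f a j y \<le> 1"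
    using assms by (intro fwd_chain_bounds[where c="\<lambda>_. 0"]) auto
  moreover have "(0::real) \<le> (\<Prod>k\<in>{a..<a + j}. 0)" by (rule prod_nonneg) simp
  ultimately show ?thesis by linarith
qed

lemma integrable_fwd_chain:
  assumes "prob_space M"
    and "\<And>k. k \<in> {a..<a + j} \<Longrightarrow> (\<lambda>p. f k (fst p) (snd p)) \<in> borel_measurable (M \<Otimes>\<^sub>M M)"
    and "\<And>k x y. k \<in> {a..<a + j} \<Longrightarrow> x \<in> space M \<Longrightarrow> y \<in> space M \<Longrightarrow> 0 \<le> f k x y \<and> f k x y \<le> 1"
  shows "integrable M (fwd_chain M f a j)"
proof -
  interpret prob_space M by fact
  show ?thesis
    using fwd_chain_unit_interval[OF assms] borel_measurable_fwd_chain[OF assms(1,2)]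
    by (intro integrable_const_bound[where B=1] AE_I2) auto
qed

lemma integral_fwd_chain_pos:
  fixes \<nu> :: "nat \<Rightarrow> real"
  assumes P: "prob_space M"
    and fm: "\<And>k. k \<in> {a..<a + j} \<Longrightarrow> (\<lambda>p. f k (fst p) (snd p)) \<in> borel_measurable (M \<Otimes>\<^sub>M M)"
    and fb: "\<And>k x y. k \<in> {a..<a + j} \<Longrightarrow> x \<in> space M \<Longrightarrow> y \<in> space M \<Longrightarrow> \<nu> k \<le> f k x y \<and> f k x y \<le> 1"
    and \<nu>0: "\<And>k. k \<in> {a..<a + j} \<Longrightarrow> 0 < \<nu> k"
  shows "0 < (\<integral>y. fwd_chain M f a j y \<partial>M)"
proof -
  interpret prob_space M by (rule P)
  have C: "0 < (\<Prod>k\<in>{a..<a + j}. \<nu> k)" using \<nu>0 by (intro prod_pos) auto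
  have f01: "0 \<le> f k x y \<and> f k x y \<le> 1"
    if "k \<in> {a..<a + j}" "x \<in> space M" "y \<in> space M" for k x y
    using fb[OF that] \<nu>0[OF that(1)] by linarith
  have "(\<Prod>k\<in>{a..<a + j}. \<nu> k) = (\<integral>y. (\<Prod>k\<in>{a..<a + j}. \<nu> k) \<partial>M)"
    by (simp add: prob_space)
  also have "\<dots> \<le> (\<integral>y. fwd_chain M f a j y \<partial>M)"
    using fm fb \<nu>0 integrable_fwd_chain[OF P fm f01]
    by (intro integral_mono fwd_chain_bounds[OF P, THEN conjunct1]) (auto intro: less_imp_le)
  finally show ?thesis using C by linarith
qed

lemma fwd_chain_ratio_step:
  fixes \<nu> :: "nat \<Rightarrow> real"
  assumes P: "prob_space M"
    and fm: "\<And>k. k \<in> {a..Suc (a + j)} \<Longrightarrow> (\<lambda>p. f k (fst p) (snd p)) \<in> borel_measurable (M \<Otimes>\<^sub>M M)"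
    and fb: "\<And>k x y. k \<in> {a..Suc (a + j)} \<Longrightarrow> x \<in> space M \<Longrightarrow> y \<in> space M \<Longrightarrow> \<nu> k \<le> f k x y \<and> f k x y \<le> 1"
    and \<nu>0: "\<And>k. k \<in> {a..Suc (a + j)} \<Longrightarrow> 0 < \<nu> k"
    and c0: "0 \<le> c" and cf: "\<And>x y. x \<in> space M \<Longrightarrow> y \<in> space M \<Longrightarrow> c \<le> f (Suc (a + j)) x y"
    and R: "ratio_between M (fwd_chain M f a (Suc j)) (fwd_chain M f (Suc a) j) lo hi"
  obtains lo' hi' where "lo \<le> lo'" "hi' \<le> hi" "hi' - lo' = (1 - c) * (hi - lo)"
    "ratio_between M (fwd_chain M f a (Suc (Suc j))) (fwd_chain M f (Suc a) (Suc j)) lo' hi'"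
proof -
  let ?u = "fwd_chain M f a (Suc j)" and ?w = "fwd_chain M f (Suc a) j"
  have f01: "0 \<le> f k x y \<and> f k x y \<le> 1"
    if "k \<in> {a..Suc (a + j)}" "x \<in> space M" "y \<in> space M" for k x y
    using fb[OF that] \<nu>0[OF that(1)] by linarith
  have iu: "integrable M ?u" using fm f01 by (intro integrable_fwd_chain[OF P]) auto
  have iw: "integrable M ?w" using fm f01 by (intro integrable_fwd_chain[OF P]) auto
  have w0: "0 \<le> ?w y" if "y \<in> space M" for y
    using fm f01 that by (intro fwd_chain_unit_interval[OF P, THEN conjunct1]) auto
  have W: "0 < (\<integral>y. ?w y \<partial>M)"
    using fm fb \<nu>0 by (intro integral_fwd_chain_pos[OF P, where \<nu>=\<nu>]) auto
  have L: "c \<le> f (Suc (a + j)) x y \<and> f (Suc (a + j)) x y \<le> 1" if "x \<in> space M" "y \<in> space M" for x y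
    using cf[OF that] f01[OF _ that] by simp
  obtain lo' hi' where "lo \<le> lo'" "hi' \<le> hi" "hi' - lo' = (1 - c) * (hi - lo)"
    "ratio_between M (kernel_apply M (f (Suc (a + j))) ?u) (kernel_apply M (f (Suc (a + j))) ?w) lo' hi'"
    using ratio_between_kernel_apply_contract[OF P fm L c0 iu iw w0 W R] by auto
  then show ?thesis using that by simp
qed

lemma fwd_chain_ratio_preserve:
  fixes \<nu> :: "nat \<Rightarrow> real"
  assumes P: "prob_space M"
    and fm: "\<And>k. k \<in> {a..Suc (a + j)} \<Longrightarrow> (\<lambda>p. f k (fst p) (snd p)) \<in> borel_measurable (M \<Otimes>\<^sub>M M)"
    and fb: "\<And>k x y. k \<in> {a..Suc (a + j)} \<Longrightarrow> x \<in> space M \<Longrightarrow> y \<in> space M \<Longrightarrow> \<nu> k \<le> f k x y \<and> f k x y \<le> 1"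
    and \<nu>0: "\<And>k. k \<in> {a..Suc (a + j)} \<Longrightarrow> 0 < \<nu> k"
    and R: "ratio_between M (fwd_chain M f a (Suc j)) (fwd_chain M f (Suc a) j) lo hi"
  shows "ratio_between M (fwd_chain M f a (Suc (Suc j))) (fwd_chain M f (Suc a) (Suc j)) lo hi"
proof -
  obtain lo' hi' where "lo \<le> lo'" "hi' \<le> hi" "hi' - lo' = (1 - 0) * (hi - lo)"
    "ratio_between M (fwd_chain M f a (Suc (Suc j))) (fwd_chain M f (Suc a) (Suc j)) lo' hi'"
  proof (rule fwd_chain_ratio_step[OF P fm fb \<nu>0 order_refl _ R])
    fix x y assume "x \<in> space M" "y \<in> space M"
    then show "0 \<le> f (Suc (a + j)) x y"
      using fb[of "Suc (a + j)" x y] \<nu>0[of "Suc (a + j)"] by simp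
  qed
  moreover from this have "lo' = lo" "hi' = hi" by auto
  ultimately show ?thesis by simp
qed

text \<open>The observation sequences behind \<open>f\<close> and \<open>g\<close> agree before index \<open>b\<close>: up to
  there both chains coincide and every step contracts the common interval, afterwards
  each step still preserves it.\<close>
lemma fwd_chain_ratio_pair:
  fixes f g :: "nat \<Rightarrow> 'v \<Rightarrow> 'v \<Rightarrow> real" and \<nu> :: "nat \<Rightarrow> real"
  assumes P: "prob_space M"
    and "\<And>k. k \<in> {a..a + j} \<Longrightarrow> (\<lambda>p. f k (fst p) (snd p)) \<in> borel_measurable (M \<Otimes>\<^sub>M M)"
    and "\<And>k. k \<in> {a..a + j} \<Longrightarrow> (\<lambda>p. g k (fst p) (snd p)) \<in> borel_measurable (M \<Otimes>\<^sub>M M)"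
    and "\<And>k x y. k \<in> {a..a + j} \<Longrightarrow> x \<in> space M \<Longrightarrow> y \<in> space M \<Longrightarrow> \<nu> k \<le> f k x y \<and> f k x y \<le> 1"
    and "\<And>k x y. k \<in> {a..a + j} \<Longrightarrow> x \<in> space M \<Longrightarrow> y \<in> space M \<Longrightarrow> \<nu> k \<le> g k x y \<and> g k x y \<le> 1"
    and "\<And>k. k \<in> {a..a + j} \<Longrightarrow> 0 < \<nu> k"
    and fg: "\<And>k. k < b \<Longrightarrow> f k = g k"
  shows "\<exists>lo hi. \<nu> a \<le> lo \<and> hi - lo \<le> (\<Prod>k\<in>{Suc a..<min (Suc a + j) b}. 1 - \<nu> k)
     \<and> ratio_between M (fwd_chain M f a (Suc j)) (fwd_chain M f (Suc a) j) lo hi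
     \<and> ratio_between M (fwd_chain M g a (Suc j)) (fwd_chain M g (Suc a) j) lo hi"
  using assms(2-6)
proof (induction j)
  case 0
  have first_step: "\<nu> a \<le> fwd_chain M h a (Suc 0) y \<and> fwd_chain M h a (Suc 0) y \<le> 1"
    if "(\<lambda>p. h a (fst p) (snd p)) \<in> borel_measurable (M \<Otimes>\<^sub>M M)"
      and "\<And>x y. x \<in> space M \<Longrightarrow> y \<in> space M \<Longrightarrow> \<nu> a \<le> h a x y \<and> h a x y \<le> 1"
      and "y \<in> space M" for h y
    using fwd_chain_bounds[OF P, of a 1 h \<nu> y] that "0.prems"(5) by auto
  have "{Suc a..<min (Suc a) b} = {}" by auto
  then show ?case
    using "0.prems" first_step[of f] first_step[of g]
    by (intro exI[of _ "\<nu> a"] exI[of _ 1]) (auto simp: ratio_between_def less_imp_le)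
next
  case (Suc j)
  have "\<exists>lo hi. \<nu> a \<le> lo \<and> hi - lo \<le> (\<Prod>k\<in>{Suc a..<min (Suc a + j) b}. 1 - \<nu> k)
     \<and> ratio_between M (fwd_chain M f a (Suc j)) (fwd_chain M f (Suc a) j) lo hi
     \<and> ratio_between M (fwd_chain M g a (Suc j)) (fwd_chain M g (Suc a) j) lo hi"
    by (rule Suc.IH) (use Suc.prems in auto)
  then obtain lo hi where lo: "\<nu> a \<le> lo"
    and width: "hi - lo \<le> (\<Prod>k\<in>{Suc a..<min (Suc a + j) b}. 1 - \<nu> k)"
    and Rf: "ratio_between M (fwd_chain M f a (Suc j)) (fwd_chain M f (Suc a) j) lo hi"
    and Rg: "ratio_between M (fwd_chain M g a (Suc j)) (fwd_chain M g (Suc a) j) lo hi"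
    by blast
  define k where "k = Suc (a + j)"
  show ?case
  proof (cases "k < b")
    case True
    have same: "fwd_chain M f a (Suc (Suc j)) = fwd_chain M g a (Suc (Suc j))"
        "fwd_chain M f (Suc a) (Suc j) = fwd_chain M g (Suc a) (Suc j)"
      by (intro fwd_chain_cong fg; use True in \<open>simp add: k_def\<close>)+
    obtain v where v: "v \<in> space M" using prob_space.not_empty[OF P] by blast
    have "\<nu> k \<le> 1" using Suc.prems(3)[of k v v] v unfolding k_def by simp
    then have \<nu>k: "0 \<le> 1 - \<nu> k" by simp
    obtain lo' hi' where st: "lo \<le> lo'" "hi' \<le> hi" "hi' - lo' = (1 - \<nu> k) * (hi - lo)"
      "ratio_between M (fwd_chain M f a (Suc (Suc j))) (fwd_chain M f (Suc a) (Suc j)) lo' hi'"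
    proof (rule fwd_chain_ratio_step[OF P _ _ _ _ _ Rf, where \<nu>=\<nu>])
      show "0 \<le> \<nu> k" using Suc.prems(5)[of k] by (simp add: k_def)
      fix x y assume "x \<in> space M" "y \<in> space M"
      then show "\<nu> k \<le> f (Suc (a + j)) x y" using Suc.prems(3)[of k x y] by (simp add: k_def)
    qed (use Suc.prems in auto)
    have "{Suc a..<min (Suc a + Suc j) b} = insert k {Suc a..<min (Suc a + j) b}"
      using True unfolding k_def by auto
    then have "(\<Prod>i\<in>{Suc a..<min (Suc a + Suc j) b}. 1 - \<nu> i)
        = (1 - \<nu> k) * (\<Prod>i\<in>{Suc a..<min (Suc a + j) b}. 1 - \<nu> i)"
      unfolding k_def by simp
    moreover have "hi' - lo' \<le> (1 - \<nu> k) * (\<Prod>i\<in>{Suc a..<min (Suc a + j) b}. 1 - \<nu> i)"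
      using st(3) width \<nu>k by (simp add: mult_left_mono)
    ultimately show ?thesis
      using lo st same by (intro exI[of _ lo'] exI[of _ hi']) auto
  next
    case False
    have "ratio_between M (fwd_chain M f a (Suc (Suc j))) (fwd_chain M f (Suc a) (Suc j)) lo hi"
      using Suc.prems by (intro fwd_chain_ratio_preserve[OF P _ _ _ Rf, where \<nu>=\<nu>]) auto
    moreover have "ratio_between M (fwd_chain M g a (Suc (Suc j))) (fwd_chain M g (Suc a) (Suc j)) lo hi"
      using Suc.prems by (intro fwd_chain_ratio_preserve[OF P _ _ _ Rg, where \<nu>=\<nu>]) auto
    moreover have "min (Suc a + Suc j) b = min (Suc a + j) b" using False unfolding k_def by simp
    ultimately show ?thesis
      using lo width by (intro exI[of _ lo] exI[of _ hi]) auto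
  qed
qed

lemma borel_measurable_PiM_prod_kernels:
  fixes f :: "nat \<Rightarrow> 'v \<Rightarrow> 'v \<Rightarrow> real"
  assumes fm: "\<And>k. k \<in> {a..<b} \<Longrightarrow> (\<lambda>p. f k (fst p) (snd p)) \<in> borel_measurable (M \<Otimes>\<^sub>M M)"
    and "1 \<le> a" "b \<le> N"
  shows "(\<lambda>v. \<Prod>k\<in>{a..<b}. f k (v k) (v (Suc k))) \<in> borel_measurable (PiM {1..N} (\<lambda>_. M))"
proof (rule borel_measurable_prod)
  fix k assume k: "k \<in> {a..<b}"
  have "(\<lambda>v. (v k, v (Suc k))) \<in> measurable (PiM {1..N} (\<lambda>_. M)) (M \<Otimes>\<^sub>M M)"
    using k assms by (intro measurable_Pair measurable_component_singleton) auto
  from measurable_compose[OF this fm[OF k]]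
  show "(\<lambda>v. f k (v k) (v (Suc k))) \<in> borel_measurable (PiM {1..N} (\<lambda>_. M))"
    by simp
qed

lemma nn_integral_PiM_integrate_last:
  fixes f :: "nat \<Rightarrow> 'v \<Rightarrow> 'v \<Rightarrow> real" and \<phi> :: "'v \<Rightarrow> ennreal"
  assumes P: "prob_space M" and a1: "1 \<le> a"
    and fm: "\<And>k. k \<in> {a..a + j} \<Longrightarrow> (\<lambda>p. f k (fst p) (snd p)) \<in> borel_measurable (M \<Otimes>\<^sub>M M)"
    and fb: "\<And>k x y. k \<in> {a..a + j} \<Longrightarrow> x \<in> space M \<Longrightarrow> y \<in> space M \<Longrightarrow> 0 \<le> f k x y"
    and \<phi>m: "\<phi> \<in> borel_measurable M"
  shows "(\<integral>\<^sup>+ v. ennreal (\<Prod>k\<in>{a..<Suc (a + j)}. f k (v k) (v (Suc k))) * \<phi> (v (Suc (a + j)))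
            \<partial>PiM {1..Suc (a + j)} (\<lambda>_. M))
       = (\<integral>\<^sup>+ v. ennreal (\<Prod>k\<in>{a..<a + j}. f k (v k) (v (Suc k)))
            * (\<integral>\<^sup>+ x. ennreal (f (a + j) (v (a + j)) x) * \<phi> x \<partial>M) \<partial>PiM {1..a + j} (\<lambda>_. M))"
proof -
  interpret prob_space M by (rule P)
  interpret PS: product_sigma_finite "\<lambda>_. M" by unfold_locales
  let ?N = "Suc (a + j)" and ?F = "\<lambda>v. \<Prod>k\<in>{a..<Suc (a + j)}. f k (v k) (v (Suc k))"
  have ins: "{1..?N} = insert ?N {1..a + j}" by auto
  have Fm: "(\<lambda>v. ennreal (?F v) * \<phi> (v ?N)) \<in> borel_measurable (PiM (insert ?N {1..a + j}) (\<lambda>_. M))"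
  proof -
    have "?F \<in> borel_measurable (PiM {1..?N} (\<lambda>_. M))"
      using fm a1 by (intro borel_measurable_PiM_prod_kernels) auto
    moreover have "(\<lambda>v. v ?N) \<in> measurable (PiM {1..?N} (\<lambda>_. M)) M"
      by (intro measurable_component_singleton) auto
    ultimately show ?thesis unfolding ins[symmetric]
      by (intro borel_measurable_times_ennreal measurable_compose[OF _ \<phi>m]) auto
  qed
  have "(\<integral>\<^sup>+ v. ennreal (?F v) * \<phi> (v ?N) \<partial>PiM {1..?N} (\<lambda>_. M))
     = (\<integral>\<^sup>+ v. (\<integral>\<^sup>+ x. ennreal (?F (v(?N := x))) * \<phi> x \<partial>M) \<partial>PiM {1..a + j} (\<lambda>_. M))"
    unfolding ins by (subst PS.product_nn_integral_insert[OF _ _ Fm]) auto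
  also have "\<dots> = (\<integral>\<^sup>+ v. ennreal (\<Prod>k\<in>{a..<a + j}. f k (v k) (v (Suc k)))
            * (\<integral>\<^sup>+ x. ennreal (f (a + j) (v (a + j)) x) * \<phi> x \<partial>M) \<partial>PiM {1..a + j} (\<lambda>_. M))"
  proof (rule nn_integral_cong)
    fix v assume v: "v \<in> space (PiM {1..a + j} (\<lambda>_. M))"
    have vs: "v k \<in> space M" if "k \<in> {1..a + j}" for k using v that by (auto simp: space_PiM)
    have va: "v (a + j) \<in> space M" using vs a1 by auto
    let ?G = "\<Prod>k\<in>{a..<a + j}. f k (v k) (v (Suc k))"
    have G0: "0 \<le> ?G" using fb vs a1 by (intro prod_nonneg) auto
    have split: "ennreal (?F (v(?N := x))) * \<phi> x = ennreal ?G * (ennreal (f (a + j) (v (a + j)) x) * \<phi> x)"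
      if x: "x \<in> space M" for x
    proof -
      have "?F (v(?N := x)) = (\<Prod>k\<in>{a..<a + j}. f k ((v(?N := x)) k) ((v(?N := x)) (Suc k))) * f (a + j) (v (a + j)) x"
        by (simp add: prod.atLeastLessThan_Suc)
      also have "(\<Prod>k\<in>{a..<a + j}. f k ((v(?N := x)) k) ((v(?N := x)) (Suc k))) = ?G"
        by (intro prod.cong) auto
      finally show ?thesis
        using G0 fb[of "a + j", OF _ va x] by (simp add: ennreal_mult mult.assoc)
    qed
    have "(\<integral>\<^sup>+ x. ennreal (?F (v(?N := x))) * \<phi> x \<partial>M)
        = (\<integral>\<^sup>+ x. ennreal ?G * (ennreal (f (a + j) (v (a + j)) x) * \<phi> x) \<partial>M)"
      using split by (intro nn_integral_cong) auto
    also have "\<dots> = ennreal ?G * (\<integral>\<^sup>+ x. ennreal (f (a + j) (v (a + j)) x) * \<phi> x \<partial>M)"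
      using measurable_kernel_right[OF fm va] \<phi>m
      by (intro nn_integral_cmult borel_measurable_times_ennreal measurable_compose[OF _ measurable_ennreal]) auto
    finally show "(\<integral>\<^sup>+ x. ennreal (?F (v(?N := x))) * \<phi> x \<partial>M)
        = ennreal ?G * (\<integral>\<^sup>+ x. ennreal (f (a + j) (v (a + j)) x) * \<phi> x \<partial>M)" .
  qed
  finally show ?thesis .
qed

lemma nn_integral_PiM_fwd_chain:
  fixes f :: "nat \<Rightarrow> 'v \<Rightarrow> 'v \<Rightarrow> real" and \<phi> :: "'v \<Rightarrow> ennreal"
  assumes P: "prob_space M" and a1: "1 \<le> a"
    and fm: "\<And>k. k \<in> {a..<a + j} \<Longrightarrow> (\<lambda>p. f k (fst p) (snd p)) \<in> borel_measurable (M \<Otimes>\<^sub>M M)"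
    and fb: "\<And>k x y. k \<in> {a..<a + j} \<Longrightarrow> x \<in> space M \<Longrightarrow> y \<in> space M \<Longrightarrow> 0 \<le> f k x y \<and> f k x y \<le> 1"
    and \<phi>m: "\<phi> \<in> borel_measurable M"
  shows "(\<integral>\<^sup>+ v. ennreal (\<Prod>k\<in>{a..<a + j}. f k (v k) (v (Suc k))) * \<phi> (v (a + j)) \<partial>PiM {1..a + j} (\<lambda>_. M))
       = (\<integral>\<^sup>+ y. ennreal (fwd_chain M f a j y) * \<phi> y \<partial>M)"
  using fm fb \<phi>m
proof (induction j arbitrary: \<phi>)
  case 0
  interpret prob_space M by (rule P)
  interpret PP: product_prob_space "\<lambda>_. M" "{1..a}" by unfold_locales
  have "(\<integral>\<^sup>+ v. \<phi> (v a) \<partial>PiM {1..a} (\<lambda>_. M)) = (\<integral>\<^sup>+ y. \<phi> y \<partial>distr (PiM {1..a} (\<lambda>_. M)) M (\<lambda>v. v a))"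
    using a1 "0.prems"(3) by (subst nn_integral_distr) (auto intro!: measurable_component_singleton)
  also have "distr (PiM {1..a} (\<lambda>_. M)) M (\<lambda>v. v a) = M"
    using PP.PiM_component[of a] a1 by simp
  finally show ?case by simp
next
  case (Suc j)
  define \<psi> where "\<psi> z = (\<integral>\<^sup>+ x. ennreal (f (a + j) z x) * \<phi> x \<partial>M)" for z
  have Lm: "(\<lambda>p. f (a + j) (fst p) (snd p)) \<in> borel_measurable (M \<Otimes>\<^sub>M M)" using Suc.prems(1) by simp
  have \<psi>m: "\<psi> \<in> borel_measurable M"
  proof -
    have "(\<lambda>p. ennreal (f (a + j) (fst p) (snd p)) * \<phi> (snd p)) \<in> borel_measurable (M \<Otimes>\<^sub>M M)"
      using Lm measurable_compose[OF measurable_snd Suc.prems(3)]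
      by (intro borel_measurable_times_ennreal measurable_compose[OF _ measurable_ennreal]) auto
    then show ?thesis unfolding \<psi>_def
      using prob_space_imp_sigma_finite[OF P]
      by (intro sigma_finite_measure.borel_measurable_nn_integral) (auto simp: case_prod_beta)
  qed
  have "(\<integral>\<^sup>+ v. ennreal (\<Prod>k\<in>{a..<a + Suc j}. f k (v k) (v (Suc k))) * \<phi> (v (a + Suc j))
          \<partial>PiM {1..a + Suc j} (\<lambda>_. M))
      = (\<integral>\<^sup>+ v. ennreal (\<Prod>k\<in>{a..<a + j}. f k (v k) (v (Suc k))) * \<psi> (v (a + j)) \<partial>PiM {1..a + j} (\<lambda>_. M))"
    unfolding \<psi>_def using nn_integral_PiM_integrate_last[OF P a1, of j f \<phi>] Suc.prems by auto
  also have "\<dots> = (\<integral>\<^sup>+ y. ennreal (fwd_chain M f a j y) * \<psi> y \<partial>M)"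
    using Suc.prems \<psi>m by (intro Suc.IH) auto
  also have "\<dots> = (\<integral>\<^sup>+ y. ennreal (fwd_chain M f a (Suc j) y) * \<phi> y \<partial>M)"
    unfolding \<psi>_def fwd_chain.simps
    using Suc.prems
    by (intro nn_integral_kernel_apply[OF P Lm] borel_measurable_fwd_chain[OF P] fwd_chain_unit_interval[OF P]) auto
  finally show ?case .
qed

section \<open>Cylinder probabilities of the hidden Markov model\<close>

lemma indicator_agree_eq_prod:
  fixes x y :: "'i \<Rightarrow> 'x"
  assumes "S \<subseteq> I" "finite I"
  shows "indicator {x. \<forall>k\<in>S. x k = y k} x = (\<Prod>i\<in>I. if i \<in> S then indicator {y i} (x i) else (1::ennreal))"
proof (cases "\<forall>k\<in>S. x k = y k")
  case True
  then show ?thesis by (simp add: prod.neutral)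
next
  case False
  then obtain k where "k \<in> S" "x k \<noteq> y k" by auto
  then have "(\<Prod>i\<in>I. if i \<in> S then indicator {y i} (x i) else (1::ennreal)) = 0"
    using assms by (intro prod_zero bexI[of _ k]) auto
  then show ?thesis using False by simp
qed

lemma measurable_hmm_density:
  fixes K :: "nat \<Rightarrow> 'x \<Rightarrow> 'v \<Rightarrow> 'v \<Rightarrow> real"
  assumes fin: "finite (UNIV :: 'x set)"
    and K_meas: "\<And>i x. i \<in> {1..n} \<Longrightarrow> (\<lambda>p. K i x (fst p) (snd p)) \<in> borel_measurable (M \<Otimes>\<^sub>M M)"
  shows "(\<lambda>(v, x). ennreal (\<Prod>i\<in>{1..n}. K i (x i) (v i) (v (Suc i))))
     \<in> borel_measurable (PiM {1..n+1} (\<lambda>_. M) \<Otimes>\<^sub>M PiM {1..n} (\<lambda>_. count_space UNIV))"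
proof -
  let ?N = "PiM {1..n+1} (\<lambda>_. M) \<Otimes>\<^sub>M PiM {1..n} (\<lambda>_. count_space (UNIV :: 'x set))"
  have "(\<lambda>p. \<Prod>i\<in>{1..n}. K i (snd p i) (fst p i) (fst p (Suc i))) \<in> borel_measurable ?N"
  proof (rule borel_measurable_prod)
    fix i assume i: "i \<in> {1..n}"
    have pm: "(\<lambda>p. (fst p i, fst p (Suc i))) \<in> measurable ?N (M \<Otimes>\<^sub>M M)"
      using i by (intro measurable_Pair measurable_compose[OF measurable_fst measurable_component_singleton]) auto
    have gm: "(\<lambda>p. snd p i) \<in> measurable ?N (count_space UNIV)"
      using i by (intro measurable_compose[OF measurable_snd measurable_component_singleton]) auto
    show "(\<lambda>p. K i (snd p i) (fst p i) (fst p (Suc i))) \<in> borel_measurable ?N"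
    proof (rule measurable_compose_countable'[OF _ gm])
      show "(\<lambda>p. K i c (fst p i) (fst p (Suc i))) \<in> borel_measurable ?N" for c
        using measurable_compose[OF pm K_meas[OF i, of c]] by simp
    qed (use fin in \<open>rule countable_finite\<close>)
  qed
  from measurable_compose[OF this measurable_ennreal] show ?thesis
    by (simp add: case_prod_beta)
qed

text \<open>Summing out the unobserved coordinates: each factor with an unconstrained observation
  contributes \<open>\<Sum>\<^sub>x K i x v w = 1\<close>.\<close>
lemma nn_integral_hmm_observations:
  fixes K :: "nat \<Rightarrow> 'x \<Rightarrow> 'v \<Rightarrow> 'v \<Rightarrow> real" and xs :: "nat \<Rightarrow> 'x"
  assumes fin: "finite (UNIV :: 'x set)"
    and Ksum: "\<And>i v w. i \<in> {1..n} \<Longrightarrow> v \<in> space M \<Longrightarrow> w \<in> space M \<Longrightarrow> (\<Sum>x\<in>UNIV. K i x v w) = 1"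
    and Kb: "\<And>i x v w. i \<in> {1..n} \<Longrightarrow> v \<in> space M \<Longrightarrow> w \<in> space M \<Longrightarrow> 0 \<le> K i x v w"
    and vs: "\<And>k. k \<in> {1..n+1} \<Longrightarrow> v k \<in> space M" and a1: "1 \<le> a"
  shows "(\<integral>\<^sup>+ x. ennreal (\<Prod>i\<in>{1..n}. K i (x i) (v i) (v (Suc i))) * indicator {x. \<forall>k\<in>{a..n}. x k = xs k} x
            \<partial>PiM {1..n} (\<lambda>_. count_space UNIV))
       = ennreal (\<Prod>k\<in>{a..n}. K k (xs k) (v k) (v (Suc k)))"
proof -
  interpret PX: product_sigma_finite "\<lambda>_. count_space (UNIV :: 'x set)"
    unfolding product_sigma_finite_def by (simp add: sigma_finite_measure_count_space_finite[OF fin])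
  define g where "g i c = ennreal (K i c (v i) (v (Suc i))) * (if i \<in> {a..n} then indicator {xs i} c else 1)"
    for i c
  have "(\<integral>\<^sup>+ x. ennreal (\<Prod>i\<in>{1..n}. K i (x i) (v i) (v (Suc i))) * indicator {x. \<forall>k\<in>{a..n}. x k = xs k} x
            \<partial>PiM {1..n} (\<lambda>_. count_space UNIV))
      = (\<integral>\<^sup>+ x. (\<Prod>i\<in>{1..n}. g i (x i)) \<partial>PiM {1..n} (\<lambda>_. count_space UNIV))"
  proof (rule nn_integral_cong)
    fix x :: "nat \<Rightarrow> 'x"
    have "ennreal (\<Prod>i\<in>{1..n}. K i (x i) (v i) (v (Suc i))) = (\<Prod>i\<in>{1..n}. ennreal (K i (x i) (v i) (v (Suc i))))"
      using Kb vs by (intro prod_ennreal[symmetric]) auto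
    then show "ennreal (\<Prod>i\<in>{1..n}. K i (x i) (v i) (v (Suc i))) * indicator {x. \<forall>k\<in>{a..n}. x k = xs k} x
        = (\<Prod>i\<in>{1..n}. g i (x i))"
      using a1 by (simp add: g_def indicator_agree_eq_prod[of _ "{1..n}"] prod.distrib)
  qed
  also have "\<dots> = (\<Prod>i\<in>{1..n}. \<integral>\<^sup>+ c. g i c \<partial>count_space UNIV)"
    by (rule PX.product_nn_integral_prod) auto
  also have "\<dots> = (\<Prod>i\<in>{1..n}. if i \<in> {a..n} then ennreal (K i (xs i) (v i) (v (Suc i))) else 1)"
  proof (rule prod.cong)
    fix i assume i: "i \<in> {1..n}"
    have "(\<integral>\<^sup>+ c. g i c \<partial>count_space UNIV) = (\<Sum>c\<in>UNIV. g i c)"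
      by (rule nn_integral_count_space_finite[OF fin])
    also have "\<dots> = (if i \<in> {a..n} then ennreal (K i (xs i) (v i) (v (Suc i))) else 1)"
    proof (cases "i \<in> {a..n}")
      case True
      then show ?thesis using fin by (simp add: g_def indicator_def if_distrib[of "\<lambda>t. _ * t"] cong: if_cong)
    next
      case False
      then have gi: "g i = (\<lambda>c. ennreal (K i c (v i) (v (Suc i))))" by (auto simp: g_def fun_eq_iff)
      have "(\<Sum>c\<in>UNIV. ennreal (K i c (v i) (v (Suc i)))) = ennreal (\<Sum>c\<in>UNIV. K i c (v i) (v (Suc i)))"
        using Kb[OF i] vs i by (intro sum_ennreal) auto
      also have "\<dots> = 1" using Ksum[OF i] vs i by simp
      finally show ?thesis using False gi by auto
    qed
    finally show "(\<integral>\<^sup>+ c. g i c \<partial>count_space UNIV)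
        = (if i \<in> {a..n} then ennreal (K i (xs i) (v i) (v (Suc i))) else 1)" .
  qed simp
  also have "\<dots> = (\<Prod>i\<in>{a..n}. ennreal (K i (xs i) (v i) (v (Suc i))))"
    using a1 by (subst prod.If_cases) (auto intro!: prod.cong)
  also have "\<dots> = ennreal (\<Prod>k\<in>{a..n}. K k (xs k) (v k) (v (Suc k)))"
    using Kb vs a1 by (intro prod_ennreal) auto
  finally show ?thesis .
qed

lemma sets_observation_cylinder:
  fixes M :: "'v measure" and n :: nat and xs :: "nat \<Rightarrow> 'x"
  assumes "1 \<le> a"
  defines "N \<equiv> PiM {1..n+1} (\<lambda>_. M) \<Otimes>\<^sub>M PiM {1..n} (\<lambda>_. count_space (UNIV :: 'x set))"
  shows "{p \<in> space N. \<forall>k\<in>{a..n}. snd p k = xs k} \<in> sets N"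
proof (rule sets.sets_Collect_finite_All)
  fix k assume k: "k \<in> {a..n}"
  have "(\<lambda>p. snd p k) \<in> measurable N (count_space UNIV)"
    unfolding N_def using k assms(1)
    by (intro measurable_compose[OF measurable_snd measurable_component_singleton]) auto
  from measurable_sets[OF this, of "{xs k}"]
  show "{p \<in> space N. snd p k = xs k} \<in> sets N" by (simp add: vimage_def Int_def conj_commute)
qed simp

lemma emeasure_hmm_cylinder:
  fixes M :: "'v measure" and K :: "nat \<Rightarrow> 'x \<Rightarrow> 'v \<Rightarrow> 'v \<Rightarrow> real" and xs :: "nat \<Rightarrow> 'x"
  assumes fin: "finite (UNIV :: 'x set)"
    and K_meas: "\<And>i x. i \<in> {1..n} \<Longrightarrow> (\<lambda>p. K i x (fst p) (snd p)) \<in> borel_measurable (M \<Otimes>\<^sub>M M)"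
    and Ksum: "\<And>i v w. i \<in> {1..n} \<Longrightarrow> v \<in> space M \<Longrightarrow> w \<in> space M \<Longrightarrow> (\<Sum>x\<in>UNIV. K i x v w) = 1"
    and Kb: "\<And>i x v w. i \<in> {1..n} \<Longrightarrow> v \<in> space M \<Longrightarrow> w \<in> space M \<Longrightarrow> 0 \<le> K i x v w"
    and a1: "1 \<le> a"
  shows "emeasure (hmm_law M K n) {p \<in> space (hmm_law M K n). \<forall>k\<in>{a..n}. snd p k = xs k}
       = (\<integral>\<^sup>+ v. ennreal (\<Prod>k\<in>{a..n}. K k (xs k) (v k) (v (Suc k))) \<partial>PiM {1..n+1} (\<lambda>_. M))"
proof -
  let ?PV = "PiM {1..n+1} (\<lambda>_. M)" and ?PX = "PiM {1..n} (\<lambda>_. count_space (UNIV :: 'x set))"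
  let ?N = "?PV \<Otimes>\<^sub>M ?PX"
  define dens where "dens = (\<lambda>(v, x). ennreal (\<Prod>i\<in>{1..n}. K i (x i) (v i) (v (Suc i))))"
  define C where "C = {p \<in> space ?N. \<forall>k\<in>{a..n}. snd p k = xs k}"
  have law: "hmm_law M K n = density ?N dens" unfolding hmm_law_def dens_def by simp
  have dm: "dens \<in> borel_measurable ?N"
    unfolding dens_def by (rule measurable_hmm_density[OF fin K_meas])
  have Cm: "C \<in> sets ?N" unfolding C_def by (rule sets_observation_cylinder[OF a1])
  interpret PX: finite_product_sigma_finite "\<lambda>_. count_space (UNIV :: 'x set)" "{1..n}"
    unfolding finite_product_sigma_finite_def product_sigma_finite_def finite_product_sigma_finite_axioms_def
    by (simp add: sigma_finite_measure_count_space_finite[OF fin])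
  have "emeasure (hmm_law M K n) C = (\<integral>\<^sup>+ p. dens p * indicator C p \<partial>?N)"
    unfolding law by (rule emeasure_density[OF dm Cm])
  also have "\<dots> = (\<integral>\<^sup>+ v. (\<integral>\<^sup>+ x. dens (v, x) * indicator C (v, x) \<partial>?PX) \<partial>?PV)"
    using borel_measurable_times_ennreal[OF dm borel_measurable_indicator[OF Cm]]
    by (intro PX.nn_integral_fst[symmetric]) simp
  also have "\<dots> = (\<integral>\<^sup>+ v. ennreal (\<Prod>k\<in>{a..n}. K k (xs k) (v k) (v (Suc k))) \<partial>?PV)"
  proof (rule nn_integral_cong)
    fix v assume v: "v \<in> space ?PV"
    have "(\<integral>\<^sup>+ x. dens (v, x) * indicator C (v, x) \<partial>?PX)
        = (\<integral>\<^sup>+ x. ennreal (\<Prod>i\<in>{1..n}. K i (x i) (v i) (v (Suc i)))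
              * indicator {x. \<forall>k\<in>{a..n}. x k = xs k} x \<partial>?PX)"
      using v by (intro nn_integral_cong) (auto simp: dens_def C_def space_pair_measure indicator_def)
    also have "\<dots> = ennreal (\<Prod>k\<in>{a..n}. K k (xs k) (v k) (v (Suc k)))"
      using v Kb by (intro nn_integral_hmm_observations[OF fin Ksum _ _ a1]) (auto simp: space_PiM)
    finally show "(\<integral>\<^sup>+ x. dens (v, x) * indicator C (v, x) \<partial>?PX)
        = ennreal (\<Prod>k\<in>{a..n}. K k (xs k) (v k) (v (Suc k)))" .
  qed
  finally show ?thesis unfolding C_def law by simp
qed

lemma measure_hmm_cylinder:
  fixes M :: "'v measure" and K :: "nat \<Rightarrow> 'x \<Rightarrow> 'v \<Rightarrow> 'v \<Rightarrow> real" and xs :: "nat \<Rightarrow> 'x"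
  assumes P: "prob_space M" and fin: "finite (UNIV :: 'x set)"
    and K_meas: "\<And>i x. i \<in> {1..n} \<Longrightarrow> (\<lambda>p. K i x (fst p) (snd p)) \<in> borel_measurable (M \<Otimes>\<^sub>M M)"
    and Ksum: "\<And>i v w. i \<in> {1..n} \<Longrightarrow> v \<in> space M \<Longrightarrow> w \<in> space M \<Longrightarrow> (\<Sum>x\<in>UNIV. K i x v w) = 1"
    and Kb: "\<And>i x v w. i \<in> {1..n} \<Longrightarrow> v \<in> space M \<Longrightarrow> w \<in> space M \<Longrightarrow> 0 \<le> K i x v w \<and> K i x v w \<le> 1"
    and a1: "1 \<le> a" and an: "a \<le> n + 1"
  shows "measure (hmm_law M K n) {p \<in> space (hmm_law M K n). \<forall>k\<in>{a..n}. snd p k = xs k}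
       = (\<integral>y. fwd_chain M (\<lambda>k. K k (xs k)) a (n + 1 - a) y \<partial>M)"
proof -
  let ?r = "fwd_chain M (\<lambda>k. K k (xs k)) a (n + 1 - a)"
  have aj: "a + (n + 1 - a) = n + 1" and range: "{a..<a + (n + 1 - a)} = {a..n}" using an by auto
  have kernels: "(\<lambda>p. K k (xs k) (fst p) (snd p)) \<in> borel_measurable (M \<Otimes>\<^sub>M M)"
      "\<And>x y. x \<in> space M \<Longrightarrow> y \<in> space M \<Longrightarrow> 0 \<le> K k (xs k) x y \<and> K k (xs k) x y \<le> 1"
    if "k \<in> {a..<a + (n + 1 - a)}" for k
    using that a1 K_meas Kb unfolding range by auto
  have Kb0: "\<And>i x v w. i \<in> {1..n} \<Longrightarrow> v \<in> space M \<Longrightarrow> w \<in> space M \<Longrightarrow> 0 \<le> K i x v w"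
    using Kb by blast
  have "emeasure (hmm_law M K n) {p \<in> space (hmm_law M K n). \<forall>k\<in>{a..n}. snd p k = xs k}
      = (\<integral>\<^sup>+ v. ennreal (\<Prod>k\<in>{a..<a + (n + 1 - a)}. K k (xs k) (v k) (v (Suc k))) * 1
            \<partial>PiM {1..a + (n + 1 - a)} (\<lambda>_. M))"
    unfolding aj atLeastLessThanSuc_atLeastAtMost[of a n, unfolded Suc_eq_plus1] mult_1_right
    by (rule emeasure_hmm_cylinder[OF fin K_meas Ksum Kb0 a1])
  also have "\<dots> = (\<integral>\<^sup>+ y. ennreal (?r y) * 1 \<partial>M)"
    using kernels by (intro nn_integral_PiM_fwd_chain[OF P a1]) auto
  also have "\<dots> = ennreal (\<integral>y. ?r y \<partial>M)"
    using integrable_fwd_chain[OF P kernels] fwd_chain_unit_interval[OF P kernels]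
    by (simp, intro nn_integral_eq_integral) auto
  finally have "emeasure (hmm_law M K n) {p \<in> space (hmm_law M K n). \<forall>k\<in>{a..n}. snd p k = xs k}
      = ennreal (\<integral>y. ?r y \<partial>M)" .
  moreover have "0 \<le> (\<integral>y. ?r y \<partial>M)"
    using fwd_chain_unit_interval[OF P kernels] by (intro integral_nonneg_AE AE_I2) auto
  ultimately show ?thesis unfolding measure_def by simp
qed

lemma cond_prob_eq_fwd_chain_ratio:
  fixes M :: "'v measure" and K :: "nat \<Rightarrow> 'x \<Rightarrow> 'v \<Rightarrow> 'v \<Rightarrow> real" and xs :: "nat \<Rightarrow> 'x"
  assumes "prob_space M" and "finite (UNIV :: 'x set)"
    and "\<And>i x. i \<in> {1..n} \<Longrightarrow> (\<lambda>p. K i x (fst p) (snd p)) \<in> borel_measurable (M \<Otimes>\<^sub>M M)"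
    and "\<And>i v w. i \<in> {1..n} \<Longrightarrow> v \<in> space M \<Longrightarrow> w \<in> space M \<Longrightarrow> (\<Sum>x\<in>UNIV. K i x v w) = 1"
    and "\<And>i x v w. i \<in> {1..n} \<Longrightarrow> v \<in> space M \<Longrightarrow> w \<in> space M \<Longrightarrow> 0 \<le> K i x v w \<and> K i x v w \<le> 1"
    and "1 \<le> q" and "q \<le> n"
  shows "cond_prob M K n q xs
       = (\<integral>y. fwd_chain M (\<lambda>k. K k (xs k)) q (Suc (n - q)) y \<partial>M)
       / (\<integral>y. fwd_chain M (\<lambda>k. K k (xs k)) (Suc q) (n - q) y \<partial>M)"
proof -
  have "measure (hmm_law M K n) {p \<in> space (hmm_law M K n). \<forall>k\<in>{q..n}. snd p k = xs k}
      = (\<integral>y. fwd_chain M (\<lambda>k. K k (xs k)) q (n + 1 - q) y \<partial>M)"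
    and "measure (hmm_law M K n) {p \<in> space (hmm_law M K n). \<forall>k\<in>{Suc q..n}. snd p k = xs k}
      = (\<integral>y. fwd_chain M (\<lambda>k. K k (xs k)) (Suc q) (n + 1 - Suc q) y \<partial>M)"
    using assms(6,7) by (intro measure_hmm_cylinder[OF assms(1-5)]; simp)+
  moreover have "n + 1 - q = Suc (n - q)" "n + 1 - Suc q = n - q" using assms(7) by auto
  ultimately show ?thesis unfolding cond_prob_def by (simp only:)
qed

lemma cond_prob_between:
  fixes M :: "'v measure" and K :: "nat \<Rightarrow> 'x \<Rightarrow> 'v \<Rightarrow> 'v \<Rightarrow> real" and xs :: "nat \<Rightarrow> 'x"
    and \<nu> :: "nat \<Rightarrow> real"
  assumes P: "prob_space M" and fin: "finite (UNIV :: 'x set)"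
    and K_meas: "\<And>i x. i \<in> {1..n} \<Longrightarrow> (\<lambda>p. K i x (fst p) (snd p)) \<in> borel_measurable (M \<Otimes>\<^sub>M M)"
    and Ksum: "\<And>i v w. i \<in> {1..n} \<Longrightarrow> v \<in> space M \<Longrightarrow> w \<in> space M \<Longrightarrow> (\<Sum>x\<in>UNIV. K i x v w) = 1"
    and \<nu>0: "\<And>i. i \<in> {1..n} \<Longrightarrow> 0 < \<nu> i"
    and K_bounds: "\<And>i x v w. i \<in> {1..n} \<Longrightarrow> v \<in> space M \<Longrightarrow> w \<in> space M \<Longrightarrow> \<nu> i \<le> K i x v w \<and> K i x v w \<le> 1"
    and q: "1 \<le> q" "q \<le> n"
    and R: "ratio_between M (fwd_chain M (\<lambda>k. K k (xs k)) q (Suc (n - q)))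
                             (fwd_chain M (\<lambda>k. K k (xs k)) (Suc q) (n - q)) lo hi"
  shows "lo \<le> cond_prob M K n q xs \<and> cond_prob M K n q xs \<le> hi"
proof -
  have K01: "0 \<le> K i x v w \<and> K i x v w \<le> 1"
    if "i \<in> {1..n}" "v \<in> space M" "w \<in> space M" for i x v w
    using K_bounds[OF that, of x] \<nu>0[OF that(1)] by linarith
  have "lo \<le> (\<integral>y. fwd_chain M (\<lambda>k. K k (xs k)) q (Suc (n - q)) y \<partial>M)
              / (\<integral>y. fwd_chain M (\<lambda>k. K k (xs k)) (Suc q) (n - q) y \<partial>M)
      \<and> (\<integral>y. fwd_chain M (\<lambda>k. K k (xs k)) q (Suc (n - q)) y \<partial>M)
              / (\<integral>y. fwd_chain M (\<lambda>k. K k (xs k)) (Suc q) (n - q) y \<partial>M) \<le> hi"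
  proof (rule ratio_between_integral[OF R])
    show "integrable M (fwd_chain M (\<lambda>k. K k (xs k)) q (Suc (n - q)))"
      and "integrable M (fwd_chain M (\<lambda>k. K k (xs k)) (Suc q) (n - q))"
      using q K_meas K01 by (intro integrable_fwd_chain[OF P]; simp)+
    show "0 < (\<integral>y. fwd_chain M (\<lambda>k. K k (xs k)) (Suc q) (n - q) y \<partial>M)"
      using q K_meas K_bounds \<nu>0 by (intro integral_fwd_chain_pos[OF P, where \<nu>=\<nu>]) auto
  qed
  then show ?thesis
    using cond_prob_eq_fwd_chain_ratio[OF P fin K_meas Ksum K01 q] by simp
qed

theorem lemma8:
  fixes M :: "'v measure"
    and K :: "nat \<Rightarrow> 'x \<Rightarrow> 'v \<Rightarrow> 'v \<Rightarrow> real"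
    and \<nu> :: "nat \<Rightarrow> real"
    and n q q' :: nat
    and xs :: "nat \<Rightarrow> 'x"
    and x' :: 'x
  assumes "prob_space M"
    and "n \<ge> 1"
    and K_meas: "\<And>i x. i \<in> {1..n} \<Longrightarrow>
                   (\<lambda>p. K i x (fst p) (snd p)) \<in> borel_measurable (M \<Otimes>\<^sub>M M)"
    and K_prob: "\<And>i v w. i \<in> {1..n} \<Longrightarrow> v \<in> space M \<Longrightarrow> w \<in> space M \<Longrightarrow>
                   ((\<lambda>x. K i x v w) has_sum 1) UNIV"
    and H2_pos: "\<And>i. i \<in> {1..n} \<Longrightarrow> \<nu> i > 0"
    and H2: "\<And>i x v w. i \<in> {1..n} \<Longrightarrow> v \<in> space M \<Longrightarrow> w \<in> space M \<Longrightarrow>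
                   \<nu> i \<le> K i x v w \<and> K i x v w \<le> 1"
    and "1 \<le> q" and "q \<le> q'" and "q' \<le> n"
  shows "\<bar>ln (cond_prob M K n q xs) - ln (cond_prob M K n q (xs(q' := x')))\<bar>
           \<le> (1 / \<nu> q) * (\<Prod>k\<in>{q+1..q'-1}. (1 - \<nu> k))"
proof -
  note P = \<open>prob_space M\<close> and q = \<open>1 \<le> q\<close> \<open>q \<le> q'\<close> \<open>q' \<le> n\<close>
  obtain v0 where v0: "v0 \<in> space M" using prob_space.not_empty[OF P] by blast
  have fin: "finite (UNIV :: 'x set)"
    using \<open>n \<ge> 1\<close> H2_pos H2 v0
    by (intro finite_UNIV_if_has_sum_lower_bound[OF K_prob[of 1 v0 v0], of "\<nu> 1"]) auto
  have Ksum: "(\<Sum>x\<in>UNIV. K i x v w) = 1" if "i \<in> {1..n}" "v \<in> space M" "w \<in> space M" for i v w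
    using has_sum_unique[OF has_sum_finite[OF fin] K_prob[OF that]] .
  define ys where "ys = xs(q' := x')"
  obtain lo hi where lo: "\<nu> q \<le> lo" and width: "hi - lo \<le> (\<Prod>k\<in>{Suc q..<min (Suc q + (n - q)) q'}. 1 - \<nu> k)"
    and R: "ratio_between M (fwd_chain M (\<lambda>k. K k (xs k)) q (Suc (n - q))) (fwd_chain M (\<lambda>k. K k (xs k)) (Suc q) (n - q)) lo hi"
      "ratio_between M (fwd_chain M (\<lambda>k. K k (ys k)) q (Suc (n - q))) (fwd_chain M (\<lambda>k. K k (ys k)) (Suc q) (n - q)) lo hi"
    using fwd_chain_ratio_pair[OF P, of q "n - q" "\<lambda>k. K k (xs k)" "\<lambda>k. K k (ys k)" \<nu> q'] q K_meas H2 H2_pos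
    by (auto simp: ys_def)
  have \<nu>q: "0 < \<nu> q" using H2_pos q by simp
  have bounds: "lo \<le> cond_prob M K n q xs \<and> cond_prob M K n q xs \<le> hi"
    "lo \<le> cond_prob M K n q ys \<and> cond_prob M K n q ys \<le> hi"
    using q by (intro cond_prob_between[OF P fin K_meas Ksum H2_pos H2 _ _ R(1)]
        cond_prob_between[OF P fin K_meas Ksum H2_pos H2 _ _ R(2)]; simp)+
  have "\<bar>ln (cond_prob M K n q xs) - ln (cond_prob M K n q ys)\<bar> \<le> (hi - lo) / lo"
    using bounds lo \<nu>q by (intro abs_ln_diff_le) auto
  also have "\<dots> \<le> (\<Prod>k\<in>{Suc q..<min (Suc q + (n - q)) q'}. 1 - \<nu> k) / \<nu> q"
    using bounds width lo \<nu>q by (intro frac_le) auto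
  also have "{Suc q..<min (Suc q + (n - q)) q'} = {q+1..q'-1}" using q by auto
  finally show ?thesis by (simp add: ys_def fun_upd_def)
qed

end
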